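(* Let $(M,\circ,\mathrm{OR})$ be a free $\mathbb{D}$-module of rank 3 with scalar product and orientation. The Lie algebra $so(3,\mathbb{D})$ of $\circ$-antisymmetric $\mathbb{D}$-linear operators on $M$ (with the commutator bracket) is canonically isomorphic to the Lie algebra $(M,-\times)$ (bracket $[x,y]=-x\times y$) via $x\mapsto -x\times\cdot$, and to $se(3)$, the Lie algebra of screw fields on the Euclidean space $E$ with the Lie bracket of vector fields, via the map $\beta$ composed with this isomorphism.
   Context: $\mathbb{D}=\{a+\epsilon b: a,b\in\mathbb{R}\}$, $\epsilon^2=0$, $\mathfrak{Re},\mathfrak{Du}$ real and dual parts. Scalar product: symmetric $\mathbb{D}$-bilinear $\circ:M\times M\to\mathbb{D}$ with $\mathfrak{Re}(x\circ x)\ge0$, equality iff $x\in\epsilon M$. Orientation: one of the two classes of ordered bases, $\{b'_j=A_{jk}b_k\}\sim\{b_k\}$ iff $\det\mathfrak{Re}(A)>0$. Cross product: $x\times y=x^iy^j\epsilon_{ijk}m_k$ in any positive orthonormal basis $\{m_i\}$. $V=M/\epsilon M$ with quotient $\pi$ and inner product induced by $\mathfrak{Re}(\cdot\circ\cdot)$. $E$ is the set of real 3-dimensional subspaces $P\subset M$ with $\mathfrak{Du}(x\circ y)=0$ on $P$ and $P\cap\epsilon M=\{0\}$; it is a Euclidean affine space over $V$ with $B-A:=d^ke_k$ where $e^B_i=e^A_i+\epsilon\,\epsilon_{ijk}d^ke^A_j$, $\{e_i\}$ a positive orthonormal basis of $V$ and $e_i^P$ the unique lift of $e_i$ lying in $P$.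 A screw field on $E$ is a map $\mathcal{s}:E\to V$ with $\mathcal{s}(Q)-\mathcal{s}(P)=s\times(Q-P)$ for some $s\in V$; $\beta:M\to\{\text{screw fields}\}$ is $\beta(z)(A)=\mathcal{s}(A)$ where $z=a+\epsilon\mathcal{s}(A)$, $a\in A$. *)

theory Defs
  imports "HOL-Analysis.Analysis"
begin

datatype dual = Dual (dRe: real) (dDu: real)

instantiation dual :: comm_ring_1
begin
definition "0 = Dual 0 0"
definition "1 = Dual 1 0"
definition "x + y = Dual (dRe x + dRe y) (dDu x + dDu y)"
definition "x - y = Dual (dRe x - dRe y) (dDu x - dDu y)"
definition "- x = Dual (- dRe x) (- dDu x)"
definition "x * y = Dual (dRe x * dRe y) (dRe x * dDu y + dDu x * dRe y)"
instance
  by standard (auto simp: zero_dual_def one_dual_def plus_dual_def minus_dual_def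
      uminus_dual_def times_dual_def algebra_simps intro: dual.expand)
end

definition deps :: dual where "deps = Dual 0 1"
definition dreal :: "real \<Rightarrow> dual" where "dreal r = Dual r 0"

text \<open>Ordered bases are functions \<open>nat \<Rightarrow> 'm\<close>; only the values at 0,1,2 matter.\<close>

definition obasis :: "(dual \<Rightarrow> 'm::ab_group_add \<Rightarrow> 'm) \<Rightarrow> (nat \<Rightarrow> 'm) \<Rightarrow> bool" where
  "obasis sc b \<longleftrightarrow> inj_on b {..<3} \<and> \<not> module.dependent sc (b ` {..<3})
      \<and> module.span sc (b ` {..<3}) = UNIV"

definition scalar_product :: "(dual \<Rightarrow> 'm::ab_group_add \<Rightarrow> 'm) \<Rightarrow> ('m \<Rightarrow> 'm \<Rightarrow> dual) \<Rightarrow> bool" where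
  "scalar_product sc sp \<longleftrightarrow>
     (\<forall>x y. sp x y = sp y x) \<and>
     (\<forall>x y z. sp (x + y) z = sp x z + sp y z) \<and>
     (\<forall>a x y. sp (sc a x) y = a * sp x y) \<and>
     (\<forall>x. dRe (sp x x) \<ge> 0) \<and>
     (\<forall>x. dRe (sp x x) = 0 \<longleftrightarrow> x \<in> range (sc deps))"

definition det3 :: "(nat \<Rightarrow> nat \<Rightarrow> real) \<Rightarrow> real" where
  "det3 A = A 0 0 * (A 1 1 * A 2 2 - A 1 2 * A 2 1)
          - A 0 1 * (A 1 0 * A 2 2 - A 1 2 * A 2 0)
          + A 0 2 * (A 1 0 * A 2 1 - A 1 1 * A 2 0)"

definition same_orient :: "(dual \<Rightarrow> 'm::ab_group_add \<Rightarrow> 'm) \<Rightarrow> (nat \<Rightarrow> 'm) \<Rightarrow> (nat \<Rightarrow> 'm) \<Rightarrow> bool" where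
  "same_orient sc b b' \<longleftrightarrow> (\<exists>A. (\<forall>j<3. b' j = (\<Sum>k<3. sc (A j k) (b k)))
                                \<and> det3 (\<lambda>j k. dRe (A j k)) > 0)"

definition orientation :: "(dual \<Rightarrow> 'm::ab_group_add \<Rightarrow> 'm) \<Rightarrow> (nat \<Rightarrow> 'm) set \<Rightarrow> bool" where
  "orientation sc OR \<longleftrightarrow> (\<exists>b0. obasis sc b0 \<and> OR = {b. obasis sc b \<and> same_orient sc b0 b})"

definition dmod3 :: "(dual \<Rightarrow> 'm::ab_group_add \<Rightarrow> 'm) \<Rightarrow> ('m \<Rightarrow> 'm \<Rightarrow> dual) \<Rightarrow> (nat \<Rightarrow> 'm) set \<Rightarrow> bool" where
  "dmod3 sc sp OR \<longleftrightarrow> module sc \<and> (\<exists>b. obasis sc b) \<and> scalar_product sc sp \<and> orientation sc OR"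

definition orthonormal3 :: "('m \<Rightarrow> 'm \<Rightarrow> dual) \<Rightarrow> (nat \<Rightarrow> 'm) \<Rightarrow> bool" where
  "orthonormal3 sp m \<longleftrightarrow> (\<forall>i<3. \<forall>j<3. sp (m i) (m j) = (if i = j then 1 else 0))"

text \<open>A fixed positive orthonormal basis (the constructions below are independent of the choice).\<close>
definition ponb :: "('m \<Rightarrow> 'm \<Rightarrow> dual) \<Rightarrow> (nat \<Rightarrow> 'm) set \<Rightarrow> nat \<Rightarrow> 'm" where
  "ponb sp OR = (SOME m. m \<in> OR \<and> orthonormal3 sp m)"

definition levi :: "nat \<Rightarrow> nat \<Rightarrow> nat \<Rightarrow> real" where
  "levi i j k = (if (i,j,k) \<in> {(0,1,2),(1,2,0),(2,0,1)} then 1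
                 else if (i,j,k) \<in> {(0,2,1),(2,1,0),(1,0,2)} then -1 else 0)"

definition dcross :: "(dual \<Rightarrow> 'm::ab_group_add \<Rightarrow> 'm) \<Rightarrow> ('m \<Rightarrow> 'm \<Rightarrow> dual) \<Rightarrow> (nat \<Rightarrow> 'm) set
    \<Rightarrow> 'm \<Rightarrow> 'm \<Rightarrow> 'm" where
  "dcross sc sp OR x y = (let m = ponb sp OR in
     (\<Sum>i<3. \<Sum>j<3. \<Sum>k<3. sc (sp x (m i) * sp y (m j) * dreal (levi i j k)) (m k)))"

definition so3 :: "(dual \<Rightarrow> 'm::ab_group_add \<Rightarrow> 'm) \<Rightarrow> ('m \<Rightarrow> 'm \<Rightarrow> dual) \<Rightarrow> ('m \<Rightarrow> 'm) set" where
  "so3 sc sp = {T. (\<forall>a x y. T (sc a x + y) = sc a (T x) + T y) \<and> (\<forall>x y. sp (T x) y = - sp x (T y))}"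

definition op_comm :: "('m::ab_group_add \<Rightarrow> 'm) \<Rightarrow> ('m \<Rightarrow> 'm) \<Rightarrow> 'm \<Rightarrow> 'm" where
  "op_comm T S = (\<lambda>x. T (S x) - S (T x))"

definition adx :: "(dual \<Rightarrow> 'm::ab_group_add \<Rightarrow> 'm) \<Rightarrow> ('m \<Rightarrow> 'm \<Rightarrow> dual) \<Rightarrow> (nat \<Rightarrow> 'm) set
    \<Rightarrow> 'm \<Rightarrow> 'm \<Rightarrow> 'm" where
  "adx sc sp OR x = (\<lambda>y. - dcross sc sp OR x y)"

text \<open>Elements of V are the cosets \<open>x + \<epsilon>M\<close>.\<close>

definition qproj :: "(dual \<Rightarrow> 'm::ab_group_add \<Rightarrow> 'm) \<Rightarrow> 'm \<Rightarrow> 'm set" where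
  "qproj sc x = {y. y - x \<in> range (sc deps)}"

definition Vsp :: "(dual \<Rightarrow> 'm::ab_group_add \<Rightarrow> 'm) \<Rightarrow> 'm set set" where
  "Vsp sc = range (qproj sc)"

definition rep :: "'m set \<Rightarrow> 'm" where "rep u = (SOME x. x \<in> u)"

definition vadd :: "(dual \<Rightarrow> 'm::ab_group_add \<Rightarrow> 'm) \<Rightarrow> 'm set \<Rightarrow> 'm set \<Rightarrow> 'm set" where
  "vadd sc u v = qproj sc (rep u + rep v)"
definition vsub :: "(dual \<Rightarrow> 'm::ab_group_add \<Rightarrow> 'm) \<Rightarrow> 'm set \<Rightarrow> 'm set \<Rightarrow> 'm set" where
  "vsub sc u v = qproj sc (rep u - rep v)"
definition vscale :: "(dual \<Rightarrow> 'm::ab_group_add \<Rightarrow> 'm) \<Rightarrow> real \<Rightarrow> 'm set \<Rightarrow> 'm set" where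
  "vscale sc r u = qproj sc (sc (dreal r) (rep u))"
definition vinner :: "('m \<Rightarrow> 'm \<Rightarrow> dual) \<Rightarrow> 'm set \<Rightarrow> 'm set \<Rightarrow> real" where
  "vinner sp u v = dRe (sp (rep u) (rep v))"
definition vcross :: "(dual \<Rightarrow> 'm::ab_group_add \<Rightarrow> 'm) \<Rightarrow> ('m \<Rightarrow> 'm \<Rightarrow> dual) \<Rightarrow> (nat \<Rightarrow> 'm) set
    \<Rightarrow> 'm set \<Rightarrow> 'm set \<Rightarrow> 'm set" where
  "vcross sc sp OR u v = qproj sc (dcross sc sp OR (rep u) (rep v))"

definition ebas :: "(dual \<Rightarrow> 'm::ab_group_add \<Rightarrow> 'm) \<Rightarrow> ('m \<Rightarrow> 'm \<Rightarrow> dual) \<Rightarrow> (nat \<Rightarrow> 'm) set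
    \<Rightarrow> nat \<Rightarrow> 'm set" where
  "ebas sc sp OR i = qproj sc (ponb sp OR i)"

definition vlin :: "(dual \<Rightarrow> 'm::ab_group_add \<Rightarrow> 'm) \<Rightarrow> ('m \<Rightarrow> 'm \<Rightarrow> dual) \<Rightarrow> (nat \<Rightarrow> 'm) set
    \<Rightarrow> (nat \<Rightarrow> real) \<Rightarrow> 'm set" where
  "vlin sc sp OR c = qproj sc (\<Sum>k<3. sc (dreal (c k)) (ponb sp OR k))"

definition rscale :: "(dual \<Rightarrow> 'm::ab_group_add \<Rightarrow> 'm) \<Rightarrow> real \<Rightarrow> 'm \<Rightarrow> 'm" where
  "rscale sc r x = sc (dreal r) x"

definition Esp :: "(dual \<Rightarrow> 'm::ab_group_add \<Rightarrow> 'm) \<Rightarrow> ('m \<Rightarrow> 'm \<Rightarrow> dual) \<Rightarrow> 'm set set" where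
  "Esp sc sp = {P. module.subspace (rscale sc) P \<and> vector_space.dim (rscale sc) P = 3
      \<and> (\<forall>x\<in>P. \<forall>y\<in>P. dDu (sp x y) = 0) \<and> P \<inter> range (sc deps) = {0}}"

definition lift :: "(dual \<Rightarrow> 'm::ab_group_add \<Rightarrow> 'm) \<Rightarrow> 'm set \<Rightarrow> 'm set \<Rightarrow> 'm" where
  "lift sc P v = (THE x. x \<in> P \<and> qproj sc x = v)"

text \<open>\<open>B - A := d\<^sup>k e\<^sub>k\<close> where \<open>e\<^sup>B\<^sub>i = e\<^sup>A\<^sub>i + \<epsilon> \<epsilon>\<^sub>i\<^sub>j\<^sub>k d\<^sup>k e\<^sup>A\<^sub>j\<close>.\<close>
definition Ediff :: "(dual \<Rightarrow> 'm::ab_group_add \<Rightarrow> 'm) \<Rightarrow> ('m \<Rightarrow> 'm \<Rightarrow> dual) \<Rightarrow> (nat \<Rightarrow> 'm) set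
    \<Rightarrow> 'm set \<Rightarrow> 'm set \<Rightarrow> 'm set" where
  "Ediff sc sp OR B A = vlin sc sp OR (THE d. (\<forall>k\<ge>3. d k = 0) \<and>
      (\<forall>i<3. lift sc B (ebas sc sp OR i) = lift sc A (ebas sc sp OR i)
         + (\<Sum>j<3. \<Sum>k<3. sc (deps * dreal (levi i j k * d k)) (lift sc A (ebas sc sp OR j)))))"

definition Eplus :: "(dual \<Rightarrow> 'm::ab_group_add \<Rightarrow> 'm) \<Rightarrow> ('m \<Rightarrow> 'm \<Rightarrow> dual) \<Rightarrow> (nat \<Rightarrow> 'm) set
    \<Rightarrow> 'm set \<Rightarrow> 'm set \<Rightarrow> 'm set" where
  "Eplus sc sp OR P v = (THE Q. Q \<in> Esp sc sp \<and> Ediff sc sp OR Q P = v)"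

text \<open>Vector fields on E are maps \<open>E \<rightarrow> V\<close>, taken to be \<open>undefined\<close> outside E.\<close>
definition se3 :: "(dual \<Rightarrow> 'm::ab_group_add \<Rightarrow> 'm) \<Rightarrow> ('m \<Rightarrow> 'm \<Rightarrow> dual) \<Rightarrow> (nat \<Rightarrow> 'm) set
    \<Rightarrow> ('m set \<Rightarrow> 'm set) set" where
  "se3 sc sp OR = {s. (\<forall>P. P \<notin> Esp sc sp \<longrightarrow> s P = undefined) \<and> (\<forall>P\<in>Esp sc sp. s P \<in> Vsp sc) \<and>
      (\<exists>w\<in>Vsp sc. \<forall>P\<in>Esp sc sp. \<forall>Q\<in>Esp sc sp.
          vsub sc (s Q) (s P) = vcross sc sp OR w (Ediff sc sp OR Q P))}"

definition beta :: "(dual \<Rightarrow> 'm::ab_group_add \<Rightarrow> 'm) \<Rightarrow> ('m \<Rightarrow> 'm \<Rightarrow> dual) \<Rightarrow> 'm \<Rightarrow> 'm set \<Rightarrow> 'm set" where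
  "beta sc sp z A = (if A \<in> Esp sc sp then
      (THE v. v \<in> Vsp sc \<and> (\<exists>a\<in>A. \<exists>y. qproj sc y = v \<and> z = a + sc deps y)) else undefined)"

text \<open>Directional derivative \<open>(D\<^sub>v Y)(P) = d/dt|\<^sub>t\<^sub>=\<^sub>0 Y(P + t v)\<close>, computed in the coordinates of the
  orthonormal basis \<open>e\<close> of V.\<close>
definition vderiv :: "(dual \<Rightarrow> 'm::ab_group_add \<Rightarrow> 'm) \<Rightarrow> ('m \<Rightarrow> 'm \<Rightarrow> dual) \<Rightarrow> (nat \<Rightarrow> 'm) set
    \<Rightarrow> ('m set \<Rightarrow> 'm set) \<Rightarrow> 'm set \<Rightarrow> 'm set \<Rightarrow> 'm set" where
  "vderiv sc sp OR Y P v = vlin sc sp OR (\<lambda>k.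
      deriv (\<lambda>t. vinner sp (Y (Eplus sc sp OR P (vscale sc t v))) (ebas sc sp OR k)) 0)"

definition vf_bracket :: "(dual \<Rightarrow> 'm::ab_group_add \<Rightarrow> 'm) \<Rightarrow> ('m \<Rightarrow> 'm \<Rightarrow> dual) \<Rightarrow> (nat \<Rightarrow> 'm) set
    \<Rightarrow> ('m set \<Rightarrow> 'm set) \<Rightarrow> ('m set \<Rightarrow> 'm set) \<Rightarrow> 'm set \<Rightarrow> 'm set" where
  "vf_bracket sc sp OR X Y = (\<lambda>P. if P \<in> Esp sc sp then
      vsub sc (vderiv sc sp OR Y P (X P)) (vderiv sc sp OR X P (Y P)) else undefined)"

end

(*
  In a positive orthonormal basis of M (Gram-Schmidt applied to a basis of the orientation, with a
  lower triangular change of basis) the scalar product and the cross product take their standard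
  coordinate forms over the dual numbers.  An antisymmetric operator then has an antisymmetric
  coordinate matrix, i.e. it is y \<mapsto> -z \<times> y, and the bracket of two of them is computed
  coordinatewise.  Writing a point of E as the plane of all x with Du x = p \<times> Re x, its position
  p \<in> \<real>\<^sup>3 satisfies P_q - P_p = q - p, and \<beta>(z) takes the value Du z - p \<times> Re z there:
  an affine field with linear part Re z \<times> \<cdot>.  Differentiating these affine fields along V
  shows that \<beta> maps the bracket -z \<times> w to the Lie bracket of \<beta>(z) and \<beta>(w).
*)

theory Submission
  imports Defs
begin

lemma dual_eq_iff: "x = y \<longleftrightarrow> dRe x = dRe y \<and> dDu x = dDu y"
  by (cases x; cases y) auto

lemma dual_component_simps [simp]:
  "dRe (x + y) = dRe x + dRe y" "dDu (x + y) = dDu x + dDu y"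
  "dRe (x - y) = dRe x - dRe y" "dDu (x - y) = dDu x - dDu y"
  "dRe (- x) = - dRe x" "dDu (- x) = - dDu x"
  "dRe (x * y) = dRe x * dRe y" "dDu (x * y) = dRe x * dDu y + dDu x * dRe y"
  "dRe 0 = 0" "dDu 0 = 0" "dRe 1 = 1" "dDu 1 = 0"
  "dRe deps = 0" "dDu deps = 1" "dRe (dreal r) = r" "dDu (dreal r) = 0"
  by (simp_all add: plus_dual_def minus_dual_def uminus_dual_def times_dual_def
      zero_dual_def one_dual_def deps_def dreal_def)

lemma dRe_sum: "dRe (sum f A) = (\<Sum>a\<in>A. dRe (f a))"
  by (induction A rule: infinite_finite_induct) auto

lemma dDu_sum: "dDu (sum f A) = (\<Sum>a\<in>A. dDu (f a))"
  by (induction A rule: infinite_finite_induct) auto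

lemma dreal_simps [simp]:
  "dreal 0 = 0" "dreal 1 = 1" "dreal (- a) = - dreal a"
  "dreal (a + b) = dreal a + dreal b" "dreal (a - b) = dreal a - dreal b"
  "dreal (a * b) = dreal a * dreal b"
  by (simp_all add: dual_eq_iff)

lemma deps_squared: "deps * deps = 0"
  by (simp add: dual_eq_iff)

definition dual_inverse :: "dual \<Rightarrow> dual" where
  "dual_inverse a = Dual (1 / dRe a) (- dDu a / (dRe a)\<^sup>2)"

lemma dual_inverse_mult: "dRe a \<noteq> 0 \<Longrightarrow> dual_inverse a * a = 1"
  by (simp add: dual_eq_iff dual_inverse_def power2_eq_square field_simps)

definition dual_rsqrt :: "dual \<Rightarrow> dual" where
  "dual_rsqrt a = Dual (1 / sqrt (dRe a)) (- dDu a / (2 * dRe a * sqrt (dRe a)))"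

lemma dual_rsqrt_squared_mult: "dRe a > 0 \<Longrightarrow> dual_rsqrt a * dual_rsqrt a * a = 1"
  by (simp add: dual_eq_iff dual_rsqrt_def)

lemma dRe_dual_rsqrt_pos: "dRe a > 0 \<Longrightarrow> dRe (dual_rsqrt a) > 0"
  by (simp add: dual_rsqrt_def)

lemma sum_lessThan_3: "(\<Sum>k<3. f k) = f 0 + f 1 + f (2::nat)"
  by (simp add: numeral_3_eq_3 numeral_2_eq_2 lessThan_Suc add_ac)

lemma less_3_cases: "(k::nat) < 3 \<Longrightarrow> k = 0 \<or> k = 1 \<or> k = 2"
  by auto

lemma all_less_3: "(\<forall>k<3. P k) \<longleftrightarrow> P 0 \<and> P 1 \<and> P (2::nat)"
  by (auto dest!: less_3_cases)

definition kdelta :: "nat \<Rightarrow> nat \<Rightarrow> 'a::zero_neq_one" where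
  "kdelta i k = (if k = i then 1 else 0)"

lemma sum_kdelta: "i < 3 \<Longrightarrow> (\<Sum>k<3. kdelta i k * f k) = (f i :: 'a::semiring_1)"
  by (auto simp: sum_lessThan_3 kdelta_def dest!: less_3_cases)

definition coord_cross :: "(nat \<Rightarrow> 'a::comm_ring_1) \<Rightarrow> (nat \<Rightarrow> 'a) \<Rightarrow> nat \<Rightarrow> 'a" where
  "coord_cross a b k = (if k = 0 then a 1 * b 2 - a 2 * b 1 else if k = 1 then a 2 * b 0 - a 0 * b 2
     else a 0 * b 1 - a 1 * b 0)"

lemma coord_cross_simps [simp]:
  "coord_cross a b 0 = a 1 * b 2 - a 2 * b 1" "coord_cross a b 1 = a 2 * b 0 - a 0 * b 2"
  "coord_cross a b 2 = a 0 * b 1 - a 1 * b 0" "coord_cross a b (Suc 0) = a 2 * b 0 - a 0 * b 2"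
  by (simp_all add: coord_cross_def)

lemma coord_cross_cong:
  "(\<And>k. k < 3 \<Longrightarrow> a k = a' k) \<Longrightarrow> (\<And>k. k < 3 \<Longrightarrow> b k = b' k) \<Longrightarrow> coord_cross a b = coord_cross a' b'"
  by (simp add: coord_cross_def fun_eq_iff)

lemma coord_cross_cong_right:
  "(\<And>k. k < 3 \<Longrightarrow> r k = s k) \<Longrightarrow> j < 3 \<Longrightarrow> coord_cross p r j = coord_cross p s j"
  by (auto dest!: less_3_cases)

lemma coord_cross_kdelta_inject:
  assumes "\<And>i l. i < 3 \<Longrightarrow> l < 3 \<Longrightarrow> coord_cross a (kdelta i) l = coord_cross b (kdelta i) l"
    and "k < 3"
  shows "a k = (b k :: 'a::comm_ring_1)"
  using assms(1)[of 1 2] assms(1)[of 2 0] assms(1)[of 0 1] assms(2)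
  by (auto simp: kdelta_def dest!: less_3_cases)

lemma antisymmetric_matrix_eq_coord_cross:
  fixes t :: "nat \<Rightarrow> nat \<Rightarrow> 'a::comm_ring_1"
  assumes anti: "\<And>i j. i < 3 \<Longrightarrow> j < 3 \<Longrightarrow> t j i = - t i j"
    and diag: "\<And>i. i < 3 \<Longrightarrow> t i i = 0"
  shows "\<exists>p. \<forall>r. \<forall>j<3. (\<Sum>i<3. r i * t i j) = coord_cross p r j"
proof (intro exI allI impI)
  fix r :: "nat \<Rightarrow> 'a" and j :: nat
  assume "j < 3"
  then show "(\<Sum>i<3. r i * t i j) = coord_cross (\<lambda>k. if k = 0 then t 1 2 else if k = 1 then t 2 0 else t 0 1) r j"
    using anti[of 0 1] anti[of 0 2] anti[of 1 2]
    by (auto simp: sum_lessThan_3 diag algebra_simps dest!: less_3_cases)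
qed

lemma linear_image_eq_UNIV:
  fixes s :: "real \<Rightarrow> 'a \<Rightarrow> 'a::ab_group_add" and f :: "'a \<Rightarrow> 'b::euclidean_space"
  assumes "vector_space s" and hom: "module_hom s scaleR f" and sub: "module.subspace s P"
    and inj: "inj_on f P" and dim: "vector_space.dim s P = DIM('b)"
  shows "f ` P = UNIV"
proof -
  interpret V: vector_space s by fact
  obtain B where B: "B \<subseteq> P" "V.independent B" "P \<subseteq> V.span B" "card B = V.dim P"
    using V.basis_exists[of P] by blast
  have span_B: "V.span B = P"
    using V.span_minimal[OF B(1) sub] B(3) by blast
  have "independent (f ` B)"
    using module_hom.independent_injective_image[OF hom B(2)] inj span_B
    by (simp add: dependent_raw_def)
  moreover have "card (f ` B) = DIM('b)"
    using card_image[OF inj_on_subset[OF inj B(1)]] B(4) dim by simp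
  moreover from this have "finite (f ` B)"
    by (simp add: card_ge_0_finite)
  ultimately have "UNIV \<subseteq> span (f ` B)"
    using card_eq_dim[of "f ` B" UNIV] by simp
  also have "span (f ` B) = f ` P"
    using module_hom.span_image[OF hom, of B] span_B by (simp add: span_raw_def)
  finally show ?thesis
    by blast
qed

section \<open>Positive orthonormal bases\<close>

locale dual_module3 =
  fixes sc :: "dual \<Rightarrow> 'm::ab_group_add \<Rightarrow> 'm" and sp :: "'m \<Rightarrow> 'm \<Rightarrow> dual"
    and OR :: "(nat \<Rightarrow> 'm) set"
  assumes dmod3: "dmod3 sc sp OR"
begin

sublocale M: module sc
  using dmod3 by (simp add: dmod3_def)

lemma scalar_product: "scalar_product sc sp"
  using dmod3 by (simp add: dmod3_def)

lemma sp_commute: "sp x y = sp y x"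
  and sp_add_left: "sp (x + y) z = sp x z + sp y z"
  and sp_scale_left: "sp (sc a x) y = a * sp x y"
  and sp_self_nonneg: "dRe (sp x x) \<ge> 0"
  and sp_self_eq_0_iff: "dRe (sp x x) = 0 \<longleftrightarrow> x \<in> range (sc deps)"
  using scalar_product unfolding scalar_product_def by blast+

lemma sp_add_right: "sp z (x + y) = sp z x + sp z y"
  by (simp only: sp_commute[of z] sp_add_left)

lemma sp_scale_right: "sp y (sc a x) = a * sp y x"
  by (simp only: sp_commute[of y] sp_scale_left)

lemma sp_zero_left: "sp 0 y = 0"
  using sp_scale_left[of 0 y y] by simp

lemma sp_zero_right: "sp y 0 = 0"
  by (simp only: sp_commute[of y] sp_zero_left)

lemma sp_minus_left: "sp (- x) y = - sp x y"
  using sp_scale_left[of "-1" x y] by simp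

lemma sp_minus_right: "sp y (- x) = - sp y x"
  by (simp only: sp_commute[of y] sp_minus_left)

lemma sp_diff_left: "sp (x - y) z = sp x z - sp y z"
  using sp_add_left[of x "-y" z] by (simp add: sp_minus_left)

lemma sp_diff_right: "sp z (x - y) = sp z x - sp z y"
  using sp_add_right[of z x "-y"] by (simp add: sp_minus_right)

lemma sp_sum_left: "sp (sum f A) y = (\<Sum>a\<in>A. sp (f a) y)"
  by (induction A rule: infinite_finite_induct) (auto simp: sp_zero_left sp_add_left)

lemma sp_sum_right: "sp y (sum f A) = (\<Sum>a\<in>A. sp y (f a))"
  by (induction A rule: infinite_finite_induct) (auto simp: sp_zero_right sp_add_right)

lemmas sp_simps = sp_add_left sp_add_right sp_scale_left sp_scale_right sp_zero_left sp_zero_right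
  sp_minus_left sp_minus_right sp_diff_left sp_diff_right sp_sum_left sp_sum_right

definition lincomb :: "(nat \<Rightarrow> 'm) \<Rightarrow> (nat \<Rightarrow> dual) \<Rightarrow> 'm" where
  "lincomb b c = (\<Sum>k<3. sc (c k) (b k))"

lemma lincomb_cong: "(\<And>k. k < 3 \<Longrightarrow> c k = d k) \<Longrightarrow> lincomb b c = lincomb b d"
  by (simp add: lincomb_def)

lemma lincomb_diff: "lincomb b c - lincomb b d = lincomb b (\<lambda>k. c k - d k)"
  by (simp add: lincomb_def sum_subtractf[symmetric] M.scale_left_diff_distrib)

lemma scale_lincomb: "sc a (lincomb b c) = lincomb b (\<lambda>k. a * c k)"
  by (simp add: lincomb_def sum_lessThan_3 M.scale_right_distrib)

lemma lincomb_kdelta: "i < 3 \<Longrightarrow> lincomb b (kdelta i) = b i"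
  by (auto simp: lincomb_def sum_lessThan_3 kdelta_def dest!: less_3_cases)

lemma sum_image_lincomb:
  assumes "inj_on b {..<3}"
  shows "(\<Sum>v\<in>b ` {..<3}. sc (u v) v) = lincomb b (\<lambda>j. u (b j))"
  unfolding lincomb_def by (rule sum.reindex[OF assms, unfolded comp_def])

lemma obasis_lincomb_eq_0:
  assumes b: "obasis sc b" and z: "lincomb b c = 0" and k: "k < 3"
  shows "c k = 0"
proof -
  have inj: "inj_on b {..<3}" and ind: "\<not> M.dependent (b ` {..<3})"
    using b by (auto simp: obasis_def)
  define u where "u v = c (the_inv_into {..<3} b v)" for v
  have "lincomb b (\<lambda>j. u (b j)) = lincomb b c"
    by (rule lincomb_cong) (simp add: u_def the_inv_into_f_f[OF inj])
  then have "\<forall>v\<in>b ` {..<3}. u v = 0"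
    using ind z M.dependent_finite[of "b ` {..<3}"] sum_image_lincomb[OF inj, of u] by auto
  then show ?thesis
    using k by (simp add: u_def the_inv_into_f_f[OF inj])
qed

lemma obasis_lincomb_surj:
  assumes b: "obasis sc b"
  shows "\<exists>c. x = lincomb b c"
proof -
  have inj: "inj_on b {..<3}" and "M.span (b ` {..<3}) = UNIV"
    using b by (auto simp: obasis_def)
  then obtain u where "x = (\<Sum>v\<in>b ` {..<3}. sc (u v) v)"
    using M.span_finite[of "b ` {..<3}"] by auto
  then show ?thesis
    using sum_image_lincomb[OF inj] by blast
qed

lemma sp_self_lincomb_pos:
  assumes b: "obasis sc b" and i: "i < 3" and ci: "dRe (c i) \<noteq> 0"
  shows "dRe (sp (lincomb b c) (lincomb b c)) > 0"
proof (rule ccontr)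
  assume "\<not> ?thesis"
  then obtain y where y: "lincomb b c = sc deps y"
    using sp_self_nonneg[of "lincomb b c"] sp_self_eq_0_iff by force
  have "lincomb b (\<lambda>k. deps * c k) = 0"
    by (simp add: scale_lincomb[symmetric] y deps_squared)
  then have "deps * c i = 0"
    using obasis_lincomb_eq_0[OF b _ i] by blast
  then show False
    using ci by (simp add: dual_eq_iff)
qed

lemma sp_lincomb_orthonormal3:
  assumes "orthonormal3 sp n" and "j < 3"
  shows "sp (lincomb n c) (n j) = c j"
  using assms by (auto simp: lincomb_def sum_lessThan_3 sp_simps orthonormal3_def dest!: less_3_cases)

lemma orthonormal3_independent:
  assumes n: "orthonormal3 sp n"
  shows "inj_on n {..<3}" "\<not> M.dependent (n ` {..<3})"
proof -
  show inj: "inj_on n {..<3}"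
    using n unfolding orthonormal3_def inj_on_def by (metis lessThan_iff zero_neq_one)
  show "\<not> M.dependent (n ` {..<3})"
  proof
    assume "M.dependent (n ` {..<3})"
    then obtain u j where "(\<Sum>v\<in>n ` {..<3}. sc (u v) v) = 0" "j < 3" "u (n j) \<noteq> 0"
      using M.dependent_finite[of "n ` {..<3}"] by auto
    then show False
      using sp_lincomb_orthonormal3[OF n, of j "\<lambda>j. u (n j)"] sum_image_lincomb[OF inj]
      by (simp add: sp_zero_left)
  qed
qed

lemma orthonormal3_obasis:
  assumes n: "orthonormal3 sp n" and b: "obasis sc b"
    and b_span: "\<And>j. j < 3 \<Longrightarrow> b j \<in> M.span (n ` {..<3})"
  shows "obasis sc n"
proof -
  have "M.span (b ` {..<3}) \<subseteq> M.span (n ` {..<3})"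
    using b_span by (intro M.span_minimal) auto
  then have "M.span (n ` {..<3}) = UNIV"
    using b by (auto simp: obasis_def)
  then show ?thesis
    using orthonormal3_independent[OF n] by (simp add: obasis_def)
qed

lemma same_orient_lower_triangular:
  assumes n: "\<And>j. j < 3 \<Longrightarrow> n j = lincomb b (A j)"
    and upper_0: "A 0 1 = 0" "A 0 2 = 0" "A 1 2 = 0"
    and diag_pos: "\<And>j. j < 3 \<Longrightarrow> dRe (A j j) > 0"
  shows "same_orient sc b n"
proof -
  have "det3 (\<lambda>j k. dRe (A j k)) = dRe (A 0 0) * dRe (A 1 1) * dRe (A 2 2)"
    using upper_0 by (simp add: det3_def)
  also have "\<dots> > 0"
    using diag_pos[of 0] diag_pos[of 1] diag_pos[of 2] by simp
  finally show ?thesis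
    unfolding same_orient_def using n by (auto simp: lincomb_def)
qed

lemma sp_normalize:
  "dRe (sp u u) > 0 \<Longrightarrow> sp (sc (dual_rsqrt (sp u u)) u) (sc (dual_rsqrt (sp u u)) u) = 1"
  using dual_rsqrt_squared_mult by (simp add: sp_simps mult.assoc)

lemma gram_schmidt_residuals_triangular:
  assumes u0: "u0 = b 0" and u1: "u1 = b 1 - sc \<beta> (sc a0 u0)"
    and u2: "u2 = b 2 - sc \<gamma> (sc a0 u0) - sc \<delta> (sc a1 u1)"
  obtains C :: "nat \<Rightarrow> nat \<Rightarrow> dual" where "u0 = lincomb b (C 0)" "u1 = lincomb b (C 1)" "u2 = lincomb b (C 2)"
    "C 0 0 = 1" "C 1 1 = 1" "C 2 2 = 1" "C 0 1 = 0" "C 0 2 = 0" "C 1 2 = 0"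
proof -
  define C0 :: "nat \<Rightarrow> dual" where "C0 = kdelta 0"
  define C1 where "C1 = (\<lambda>k. kdelta 1 k - \<beta> * (a0 * C0 k))"
  define C2 where "C2 = (\<lambda>k. kdelta 2 k - \<gamma> * (a0 * C0 k) - \<delta> * (a1 * C1 k))"
  have "u0 = lincomb b C0"
    by (simp add: u0 C0_def lincomb_kdelta)
  moreover from this have "u1 = lincomb b C1"
    using lincomb_kdelta[of 1 b, symmetric] by (simp add: u1 C1_def scale_lincomb lincomb_diff)
  moreover from calculation have "u2 = lincomb b C2"
    using lincomb_kdelta[of 2 b, symmetric] by (simp add: u2 C2_def scale_lincomb lincomb_diff)
  moreover have "C0 0 = 1" "C1 1 = 1" "C2 2 = 1" "C0 1 = 0" "C0 2 = 0" "C1 2 = 0"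
    by (simp_all add: C0_def C1_def C2_def kdelta_def)
  ultimately show ?thesis
    using that[of "\<lambda>j. if j = 0 then C0 else if j = 1 then C1 else C2"] by simp
qed

lemma gram_schmidt3:
  assumes b: "obasis sc b"
  obtains n A where "orthonormal3 sp n" "\<And>j. j < 3 \<Longrightarrow> n j = lincomb b (A j)"
    "A 0 1 = 0" "A 0 2 = 0" "A 1 2 = 0" "\<And>j. j < 3 \<Longrightarrow> dRe (A j j) > 0"
    "\<And>j. j < 3 \<Longrightarrow> b j \<in> M.span (n ` {..<3})"
proof -
  define u0 a0 n0 where "u0 = b 0" and "a0 = dual_rsqrt (sp u0 u0)" and "n0 = sc a0 u0"
  define \<beta> u1 a1 n1 where "\<beta> = sp (b 1) n0" and "u1 = b 1 - sc \<beta> n0"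
    and "a1 = dual_rsqrt (sp u1 u1)" and "n1 = sc a1 u1"
  define \<gamma> \<delta> u2 a2 n2 where "\<gamma> = sp (b 2) n0" and "\<delta> = sp (b 2) n1"
    and "u2 = b 2 - sc \<gamma> n0 - sc \<delta> n1" and "a2 = dual_rsqrt (sp u2 u2)" and "n2 = sc a2 u2"
  have u1_u2: "u1 = b 1 - sc \<beta> (sc a0 u0)" "u2 = b 2 - sc \<gamma> (sc a0 u0) - sc \<delta> (sc a1 u1)"
    by (simp_all add: u1_def u2_def n0_def n1_def)
  obtain C :: "nat \<Rightarrow> nat \<Rightarrow> dual" where C: "u0 = lincomb b (C 0)" "u1 = lincomb b (C 1)"
    "u2 = lincomb b (C 2)" "C 0 0 = 1" "C 1 1 = 1" "C 2 2 = 1" "C 0 1 = 0" "C 0 2 = 0" "C 1 2 = 0"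
    by (rule gram_schmidt_residuals_triangular[of u0 b u1 \<beta> a0 u2 \<gamma> \<delta> a1, OF u0_def u1_u2])
  have pos: "dRe (sp u0 u0) > 0" "dRe (sp u1 u1) > 0" "dRe (sp u2 u2) > 0"
    using sp_self_lincomb_pos[OF b, of 0 "C 0"] sp_self_lincomb_pos[OF b, of 1 "C 1"]
      sp_self_lincomb_pos[OF b, of 2 "C 2"] C by simp_all
  then have a_pos: "dRe a0 > 0" "dRe a1 > 0" "dRe a2 > 0"
    by (simp_all add: a0_def a1_def a2_def dRe_dual_rsqrt_pos)
  have o00: "sp n0 n0 = 1" and o11: "sp n1 n1 = 1" and o22: "sp n2 n2 = 1"
    using pos by (simp_all add: n0_def n1_def n2_def a0_def a1_def a2_def sp_normalize)
  have o10: "sp n1 n0 = 0"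
    by (simp add: n1_def u1_def sp_simps o00 \<beta>_def)
  have o20: "sp n2 n0 = 0" and o21: "sp n2 n1 = 0"
    using o10 by (simp_all add: n2_def u2_def sp_simps o00 o11 sp_commute[of n0 n1] \<gamma>_def \<delta>_def)
  define n :: "nat \<Rightarrow> 'm" where "n j = (if j = 0 then n0 else if j = 1 then n1 else n2)" for j
  define a :: "nat \<Rightarrow> dual" where "a j = (if j = 0 then a0 else if j = 1 then a1 else a2)" for j
  have "orthonormal3 sp n"
    using o00 o10 o11 o20 o21 o22 sp_commute[of n0 n1] sp_commute[of n0 n2] sp_commute[of n1 n2]
    by (auto simp: orthonormal3_def n_def dest!: less_3_cases)
  moreover have "n j = lincomb b (\<lambda>k. a j * C j k)" if "j < 3" for j
    using that C by (auto simp: n_def a_def n0_def n1_def n2_def scale_lincomb dest!: less_3_cases)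
  moreover have "dRe (a j * C j j) > 0" if "j < 3" for j
    using that a_pos C by (auto simp: a_def dest!: less_3_cases)
  moreover have "b j \<in> M.span (n ` {..<3})" if "j < 3" for j
  proof -
    have n_in: "n i \<in> M.span (n ` {..<3})" if "i < 3" for i
      using that by (simp add: M.span_base)
    have "u0 = sc (dual_inverse a0) n0" "u1 = sc (dual_inverse a1) n1" "u2 = sc (dual_inverse a2) n2"
      using a_pos by (simp_all add: n0_def n1_def n2_def dual_inverse_mult)
    then have "b 0 = sc (dual_inverse a0) n0" "b 1 = sc (dual_inverse a1) n1 + sc \<beta> n0"
      "b 2 = sc (dual_inverse a2) n2 + sc \<gamma> n0 + sc \<delta> n1"
      by (simp_all add: u0_def u1_def u2_def diff_eq_eq add_ac)
    then show ?thesis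
      using that n_in[of 0] n_in[of 1] n_in[of 2]
      by (auto simp: n_def intro!: M.span_add M.span_scale dest!: less_3_cases)
  qed
  ultimately show ?thesis
    using that[of n "\<lambda>j k. a j * C j k"] C by simp
qed

lemma exists_positive_orthonormal_basis: "\<exists>m. m \<in> OR \<and> orthonormal3 sp m"
proof -
  obtain b where b: "obasis sc b" and OR: "OR = {b'. obasis sc b' \<and> same_orient sc b b'}"
    using dmod3 by (auto simp: dmod3_def orientation_def)
  obtain n A where "orthonormal3 sp n" "\<And>j. j < 3 \<Longrightarrow> n j = lincomb b (A j)"
    "A 0 1 = 0" "A 0 2 = 0" "A 1 2 = 0" "\<And>j. j < 3 \<Longrightarrow> dRe (A j j) > 0"
    "\<And>j. j < 3 \<Longrightarrow> b j \<in> M.span (n ` {..<3})"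
    using gram_schmidt3[OF b] by blast
  then show ?thesis
    using OR orthonormal3_obasis[OF _ b] same_orient_lower_triangular by blast
qed

abbreviation onb :: "nat \<Rightarrow> 'm" where "onb \<equiv> ponb sp OR"

lemma onb_in_OR: "onb \<in> OR" and orthonormal3_onb: "orthonormal3 sp onb"
  using someI_ex[OF exists_positive_orthonormal_basis] by (simp_all add: ponb_def)

lemma obasis_onb: "obasis sc onb"
  using onb_in_OR dmod3 by (auto simp: dmod3_def orientation_def)

definition coord :: "'m \<Rightarrow> nat \<Rightarrow> dual" where
  "coord x k = sp x (onb k)"

definition rcoord :: "'m \<Rightarrow> nat \<Rightarrow> real" where
  "rcoord x k = dRe (coord x k)"

definition dcoord :: "'m \<Rightarrow> nat \<Rightarrow> real" where
  "dcoord x k = dDu (coord x k)"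

lemma coord_lincomb: "k < 3 \<Longrightarrow> coord (lincomb onb c) k = c k"
  unfolding coord_def by (rule sp_lincomb_orthonormal3[OF orthonormal3_onb])

lemma lincomb_coord: "lincomb onb (coord x) = x"
proof -
  obtain c where c: "x = lincomb onb c"
    using obasis_lincomb_surj[OF obasis_onb] by blast
  show ?thesis
    unfolding c by (rule lincomb_cong) (simp add: coord_lincomb)
qed

lemma coord_inject: "(\<And>k. k < 3 \<Longrightarrow> coord x k = coord y k) \<Longrightarrow> x = y"
  by (metis lincomb_coord lincomb_cong)

lemma rcoord_dcoord_inject:
  "(\<And>k. k < 3 \<Longrightarrow> rcoord x k = rcoord y k) \<Longrightarrow> (\<And>k. k < 3 \<Longrightarrow> dcoord x k = dcoord y k) \<Longrightarrow> x = y"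
  by (rule coord_inject) (simp add: dual_eq_iff rcoord_def dcoord_def)

lemma coord_simps [simp]:
  "coord (x + y) k = coord x k + coord y k" "coord (x - y) k = coord x k - coord y k"
  "coord (- x) k = - coord x k" "coord 0 k = 0" "coord (sc a x) k = a * coord x k"
  "coord (sum f A) k = (\<Sum>a\<in>A. coord (f a) k)"
  by (simp_all add: coord_def sp_simps)

lemma rcoord_dcoord_simps [simp]:
  "rcoord (x + y) k = rcoord x k + rcoord y k" "dcoord (x + y) k = dcoord x k + dcoord y k"
  "rcoord (x - y) k = rcoord x k - rcoord y k" "dcoord (x - y) k = dcoord x k - dcoord y k"
  "rcoord (- x) k = - rcoord x k" "dcoord (- x) k = - dcoord x k"
  "rcoord 0 k = 0" "dcoord 0 k = 0"
  "rcoord (sc a x) k = dRe a * rcoord x k" "dcoord (sc a x) k = dRe a * dcoord x k + dDu a * rcoord x k"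
  by (simp_all add: rcoord_def dcoord_def)

lemma coord_eq_Dual: "coord x k = Dual (rcoord x k) (dcoord x k)"
  by (simp add: rcoord_def dcoord_def)

lemma coord_onb: "j < 3 \<Longrightarrow> k < 3 \<Longrightarrow> coord (onb j) k = kdelta j k"
  using orthonormal3_onb by (simp add: coord_def orthonormal3_def kdelta_def)

lemma sp_eq_sum_coord: "sp x y = (\<Sum>k<3. coord x k * coord y k)"
proof -
  have "sp x y = sp (lincomb onb (coord x)) y"
    by (simp add: lincomb_coord)
  also have "\<dots> = (\<Sum>k<3. coord x k * coord y k)"
    by (simp add: lincomb_def sp_simps coord_def sp_commute[of y])
  finally show ?thesis .
qed

lemma dDu_sp_eq_sum_coord: "dDu (sp x y) = (\<Sum>k<3. rcoord x k * dcoord y k + dcoord x k * rcoord y k)"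
  by (simp add: sp_eq_sum_coord dDu_sum coord_eq_Dual)

lemma coord_dcross: "k < 3 \<Longrightarrow> coord (dcross sc sp OR x y) k = coord_cross (coord x) (coord y) k"
  unfolding dcross_def Let_def coord_def[symmetric]
  by (auto simp: sum_lessThan_3 levi_def coord_onb kdelta_def dest!: less_3_cases)

lemma rcoord_dcross: "k < 3 \<Longrightarrow> rcoord (dcross sc sp OR x y) k = coord_cross (rcoord x) (rcoord y) k"
  by (auto simp: rcoord_def coord_dcross dest!: less_3_cases)

lemma dcoord_dcross:
  "k < 3 \<Longrightarrow> dcoord (dcross sc sp OR x y) k = coord_cross (dcoord x) (rcoord y) k + coord_cross (rcoord x) (dcoord y) k"
  by (auto simp: rcoord_def dcoord_def coord_dcross algebra_simps dest!: less_3_cases)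

lemma in_range_deps_iff: "x \<in> range (sc deps) \<longleftrightarrow> (\<forall>k<3. rcoord x k = 0)"
proof
  assume "x \<in> range (sc deps)"
  then show "\<forall>k<3. rcoord x k = 0" by auto
next
  assume "\<forall>k<3. rcoord x k = 0"
  then have "x = sc deps (lincomb onb (\<lambda>k. dreal (dcoord x k)))"
    by (intro coord_inject) (simp add: coord_lincomb dual_eq_iff rcoord_def dcoord_def)
  then show "x \<in> range (sc deps)" by blast
qed

section \<open>The Lie algebra so(3,D)\<close>

lemma coord_adx: "k < 3 \<Longrightarrow> coord (adx sc sp OR x y) k = - coord_cross (coord x) (coord y) k"
  by (simp add: adx_def coord_dcross)

lemma adx_in_so3: "adx sc sp OR x \<in> so3 sc sp"
proof -
  have "adx sc sp OR x (sc a u + v) = sc a (adx sc sp OR x u) + adx sc sp OR x v" for a u v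
    by (rule coord_inject) (auto simp: coord_adx algebra_simps dest!: less_3_cases)
  moreover have "sp (adx sc sp OR x u) v = - sp u (adx sc sp OR x v)" for u v
    by (simp add: sp_eq_sum_coord sum_lessThan_3 coord_adx algebra_simps)
  ultimately show ?thesis
    unfolding so3_def by blast
qed

lemma adx_inj: "inj (adx sc sp OR)"
proof (rule injI)
  fix x y
  assume "adx sc sp OR x = adx sc sp OR y"
  then have "coord (adx sc sp OR x (onb j)) k = coord (adx sc sp OR y (onb j)) k" for j k
    by simp
  from this[of 2 1] this[of 0 2] this[of 1 0] show "x = y"
    by (intro coord_inject) (auto simp: coord_adx coord_onb kdelta_def dest!: less_3_cases)
qed

lemma so3_coord:
  assumes "T \<in> so3 sc sp"
  shows "coord (T y) j = (\<Sum>i<3. coord y i * coord (T (onb i)) j)"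
proof -
  have lin: "T (sc a x + z) = sc a (T x) + T z" for a x z
    using assms by (simp add: so3_def)
  have "T 0 = 0"
    using lin[of 1 0 0] by simp
  then have "T (x + z) = T x + T z" "T (sc a x) = sc a (T x)" for a x z
    using lin[of 1 x z] lin[of a x 0] by simp_all
  then have "T (lincomb onb c) = lincomb (\<lambda>i. T (onb i)) c" for c
    by (simp add: lincomb_def sum_lessThan_3)
  from this[of "coord y"] have "T y = lincomb (\<lambda>i. T (onb i)) (coord y)"
    by (simp only: lincomb_coord)
  then show ?thesis
    by (simp add: lincomb_def mult.commute)
qed

lemma so3_eq_adx:
  assumes T: "T \<in> so3 sc sp"
  obtains x where "T = adx sc sp OR x"
proof -
  define t where "t i j = coord (T (onb i)) j" for i j
  have anti: "t j i = - t i j" if "i < 3" "j < 3" for i j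
  proof -
    have "t j i = - sp (onb j) (T (onb i))"
      using T by (simp add: so3_def t_def coord_def)
    then show ?thesis
      by (simp add: t_def coord_def sp_commute)
  qed
  have diag: "t i i = 0" if "i < 3" for i
    using anti[OF that that] by (simp add: dual_eq_iff)
  have "\<exists>p. \<forall>r. \<forall>j<3. (\<Sum>i<3. r i * t i j) = coord_cross p r j"
    by (rule antisymmetric_matrix_eq_coord_cross; fact)
  then obtain p where p: "\<And>r j. j < 3 \<Longrightarrow> (\<Sum>i<3. r i * t i j) = coord_cross p r j"
    by blast
  have "T = adx sc sp OR (lincomb onb (\<lambda>k. - p k))"
  proof
    fix y
    show "T y = adx sc sp OR (lincomb onb (\<lambda>k. - p k)) y"
      by (rule coord_inject)
        (auto simp: so3_coord[OF T, folded t_def] p coord_adx coord_lincomb dest!: less_3_cases)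
  qed
  then show ?thesis
    using that by blast
qed

lemma adx_bij: "bij_betw (adx sc sp OR) UNIV (so3 sc sp)"
  unfolding bij_betw_def using adx_inj adx_in_so3 so3_eq_adx by blast

lemma adx_linear: "adx sc sp OR (sc a x + y) = (\<lambda>z. sc a (adx sc sp OR x z) + adx sc sp OR y z)"
  by (rule ext, rule coord_inject) (auto simp: coord_adx algebra_simps dest!: less_3_cases)

lemma adx_bracket: "adx sc sp OR (- dcross sc sp OR x y) = op_comm (adx sc sp OR x) (adx sc sp OR y)"
  unfolding op_comm_def
  by (rule ext, rule coord_inject) (auto simp: coord_adx coord_dcross algebra_simps dest!: less_3_cases)

lemma in_qproj: "x \<in> qproj sc x"
  by (auto simp: qproj_def intro: image_eqI[of _ _ 0])

lemma qproj_eq_iff: "qproj sc x = qproj sc y \<longleftrightarrow> (\<forall>k<3. rcoord x k = rcoord y k)"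
proof
  assume "qproj sc x = qproj sc y"
  then have "y \<in> qproj sc x"
    by (simp add: in_qproj)
  then have "y - x \<in> range (sc deps)"
    by (simp add: qproj_def)
  then show "\<forall>k<3. rcoord x k = rcoord y k"
    by (simp add: in_range_deps_iff)
qed (auto simp: qproj_def in_range_deps_iff)

lemma rcoord_rep_qproj: "k < 3 \<Longrightarrow> rcoord (rep (qproj sc x)) k = rcoord x k"
proof -
  have "rep (qproj sc x) \<in> qproj sc x"
    unfolding rep_def using in_qproj by (rule someI)
  then show "k < 3 \<Longrightarrow> ?thesis"
    by (auto simp: qproj_def in_range_deps_iff)
qed

definition vec_of :: "(nat \<Rightarrow> real) \<Rightarrow> 'm set" where
  "vec_of r = qproj sc (lincomb onb (\<lambda>k. dreal (r k)))"

definition vcoord :: "'m set \<Rightarrow> nat \<Rightarrow> real" where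
  "vcoord u = rcoord (rep u)"

lemma rcoord_lincomb_dreal: "k < 3 \<Longrightarrow> rcoord (lincomb onb (\<lambda>k. dreal (r k))) k = r k"
  by (simp add: rcoord_def coord_lincomb)

lemma qproj_eq_vec_of: "qproj sc x = vec_of (rcoord x)"
  by (simp add: vec_of_def qproj_eq_iff rcoord_lincomb_dreal)

lemma vcoord_vec_of: "k < 3 \<Longrightarrow> vcoord (vec_of r) k = r k"
  by (simp add: vcoord_def vec_of_def rcoord_rep_qproj rcoord_lincomb_dreal)

lemma vcoord_qproj: "k < 3 \<Longrightarrow> vcoord (qproj sc x) k = rcoord x k"
  by (simp add: vcoord_def rcoord_rep_qproj)

lemma vec_of_eq_iff: "vec_of r = vec_of s \<longleftrightarrow> (\<forall>k<3. r k = s k)"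
  by (simp add: vec_of_def qproj_eq_iff rcoord_lincomb_dreal)

lemma vec_of_cong: "(\<And>k. k < 3 \<Longrightarrow> r k = s k) \<Longrightarrow> vec_of r = vec_of s"
  by (simp add: vec_of_eq_iff)

lemma vec_of_in_Vsp: "vec_of r \<in> Vsp sc"
  by (simp add: vec_of_def Vsp_def)

lemma Vsp_eq_vec_of: "u \<in> Vsp sc \<Longrightarrow> u = vec_of (vcoord u)"
  unfolding Vsp_def by (clarify, simp add: qproj_eq_vec_of vec_of_eq_iff vcoord_vec_of)

lemma vadd_eq: "vadd sc u v = vec_of (\<lambda>k. vcoord u k + vcoord v k)"
  by (simp add: vadd_def qproj_eq_vec_of vcoord_def vec_of_eq_iff)

lemma vsub_eq: "vsub sc u v = vec_of (\<lambda>k. vcoord u k - vcoord v k)"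
  by (simp add: vsub_def qproj_eq_vec_of vcoord_def vec_of_eq_iff)

lemma vsub_vec_of: "vsub sc (vec_of a) (vec_of b) = vec_of (\<lambda>k. a k - b k)"
  by (simp add: vsub_eq vec_of_eq_iff vcoord_vec_of)

lemma vscale_eq: "vscale sc t u = vec_of (\<lambda>k. t * vcoord u k)"
  by (simp add: vscale_def qproj_eq_vec_of vcoord_def vec_of_eq_iff)

lemma vcross_eq: "vcross sc sp OR u v = vec_of (coord_cross (vcoord u) (vcoord v))"
  unfolding vcross_def qproj_eq_vec_of by (rule vec_of_cong) (simp add: rcoord_dcross vcoord_def)

lemma vlin_eq: "vlin sc sp OR c = vec_of c"
  by (simp add: vlin_def vec_of_def lincomb_def)

lemma ebas_eq: "i < 3 \<Longrightarrow> ebas sc sp OR i = vec_of (kdelta i)"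
  unfolding ebas_def qproj_eq_vec_of by (rule vec_of_cong) (simp add: rcoord_def coord_onb kdelta_def)

lemma vinner_eq: "vinner sp u v = (\<Sum>k<3. vcoord u k * vcoord v k)"
  by (simp add: vinner_def sp_eq_sum_coord dRe_sum vcoord_def rcoord_def)

lemma vinner_ebas: "k < 3 \<Longrightarrow> vinner sp u (ebas sc sp OR k) = vcoord u k"
  by (auto simp: vinner_eq ebas_eq vcoord_vec_of sum_lessThan_3 kdelta_def dest!: less_3_cases)

section \<open>The Euclidean affine space E\<close>

sublocale R: vector_space "rscale sc"
  by unfold_locales
    (simp_all add: rscale_def M.scale_right_distrib M.scale_left_distrib[symmetric])

lemma rcoord_dcoord_rscale [simp]:
  "rcoord (rscale sc r x) k = r * rcoord x k" "dcoord (rscale sc r x) k = r * dcoord x k"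
  by (simp_all add: rscale_def)

text \<open>\<open>plane p\<close> is the point of \<open>E\<close> with position \<open>p \<in> \<real>\<^sup>3\<close>: its element over \<open>r \<in> V\<close> has
  dual coordinates \<open>p \<times> r\<close>.\<close>

definition plane :: "(nat \<Rightarrow> real) \<Rightarrow> 'm set" where
  "plane p = {x. \<forall>j<3. dcoord x j = coord_cross p (rcoord x) j}"

definition plane_point :: "(nat \<Rightarrow> real) \<Rightarrow> (nat \<Rightarrow> real) \<Rightarrow> 'm" where
  "plane_point p r = lincomb onb (\<lambda>j. Dual (r j) (coord_cross p r j))"

lemma rcoord_plane_point: "k < 3 \<Longrightarrow> rcoord (plane_point p r) k = r k"
  and dcoord_plane_point: "k < 3 \<Longrightarrow> dcoord (plane_point p r) k = coord_cross p r k"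
  by (simp_all add: plane_point_def rcoord_def dcoord_def coord_lincomb)

lemma coord_plane_point: "l < 3 \<Longrightarrow> coord (plane_point p r) l = Dual (r l) (coord_cross p r l)"
  by (simp add: plane_point_def coord_lincomb)

lemma plane_point_in_plane: "plane_point p r \<in> plane p"
  unfolding plane_def
  by (auto simp: dcoord_plane_point rcoord_plane_point intro!: coord_cross_cong_right)

lemma plane_point_rcoord: "x \<in> plane p \<Longrightarrow> plane_point p (rcoord x) = x"
  by (rule rcoord_dcoord_inject) (auto simp: plane_def rcoord_plane_point dcoord_plane_point)

lemma plane_point_cong:
  assumes "\<And>k. k < 3 \<Longrightarrow> p k = q k" and "\<And>k. k < 3 \<Longrightarrow> r k = s k"
  shows "plane_point p r = plane_point q s"
proof -
  have "coord_cross p r = coord_cross q s"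
    by (rule coord_cross_cong) (simp_all add: assms)
  then show ?thesis
    unfolding plane_point_def by (intro lincomb_cong) (simp add: assms(2))
qed

lemma plane_eqI:
  assumes "x \<in> plane p" and "y \<in> plane p" and "\<And>k. k < 3 \<Longrightarrow> rcoord x k = rcoord y k"
  shows "x = y"
proof -
  have "plane_point p (rcoord x) = plane_point p (rcoord y)"
    by (rule plane_point_cong) (simp_all add: assms(3))
  then show ?thesis
    using assms(1,2) by (simp add: plane_point_rcoord)
qed

lemma plane_cong: "(\<And>k. k < 3 \<Longrightarrow> p k = q k) \<Longrightarrow> plane p = plane q"
  unfolding plane_def by (metis coord_cross_cong)

lemma plane_subspace: "R.subspace (plane p)"
  unfolding R.subspace_def plane_def
  by (simp add: all_less_3 right_diff_distrib distrib_left mult.left_commute)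

lemma plane_dim: "R.dim (plane p) = 3"
proof -
  define B where "B = plane_point p ` kdelta ` {..<3}"
  have inj: "inj_on (\<lambda>i. plane_point p (kdelta i)) {..<3}"
    by (rule inj_onI) (metis kdelta_def rcoord_plane_point lessThan_iff zero_neq_one)
  then have card_B: "card B = 3"
    using card_image[OF inj] by (simp add: B_def image_image)
  have lincomb_B: "x = (\<Sum>i<3. rscale sc (rcoord x i) (plane_point p (kdelta i)))" if "x \<in> plane p" for x
    using that by (intro plane_eqI[OF that] R.subspace_sum[OF plane_subspace] R.subspace_scale[OF plane_subspace])
      (auto simp: plane_point_in_plane sum_lessThan_3 rcoord_plane_point kdelta_def dest!: less_3_cases)
  have "plane p \<subseteq> R.span B"
  proof
    fix x
    assume x: "x \<in> plane p"
    have "(\<Sum>i<3. rscale sc (rcoord x i) (plane_point p (kdelta i))) \<in> R.span B"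
      by (intro R.span_sum R.span_scale R.span_base) (auto simp: B_def)
    from this lincomb_B[OF x, symmetric] show "x \<in> R.span B"
      by (rule back_subst)
  qed
  moreover have "\<not> R.dependent B"
  proof
    assume "R.dependent B"
    then obtain u i where "(\<Sum>v\<in>B. rscale sc (u v) v) = 0" "i < 3" "u (plane_point p (kdelta i)) \<noteq> 0"
      using R.dependent_finite[of B] by (auto simp: B_def)
    then have "rcoord (\<Sum>j<3. rscale sc (u (plane_point p (kdelta j))) (plane_point p (kdelta j))) i = 0"
      using inj by (simp add: B_def image_image sum.reindex)
    then show False
      using \<open>i < 3\<close> \<open>u (plane_point p (kdelta i)) \<noteq> 0\<close>
      by (auto simp: sum_lessThan_3 rcoord_plane_point kdelta_def dest!: less_3_cases)
  qed
  moreover have "B \<subseteq> plane p"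
    by (auto simp: B_def plane_point_in_plane)
  ultimately show ?thesis
    using R.dim_unique card_B by blast
qed

lemma plane_in_Esp: "plane p \<in> Esp sc sp"
proof -
  have "dDu (sp x y) = 0" if "x \<in> plane p" "y \<in> plane p" for x y
    using that by (simp add: plane_def dDu_sp_eq_sum_coord sum_lessThan_3 algebra_simps)
  moreover have "plane p \<inter> range (sc deps) = {0}"
  proof (intro equalityI subsetI)
    fix x
    assume "x \<in> plane p \<inter> range (sc deps)"
    then have "rcoord x k = 0" "dcoord x k = 0" if "k < 3" for k
      using that by (auto simp: plane_def in_range_deps_iff all_less_3 dest!: less_3_cases)
    then show "x \<in> {0}"
      by (simp add: rcoord_dcoord_inject)
  qed (auto simp: plane_def coord_cross_def intro: image_eqI[of _ _ 0])
  ultimately show ?thesis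
    unfolding Esp_def using plane_subspace plane_dim by auto
qed

lemma Esp_eqI:
  assumes P: "P \<in> Esp sc sp" and x: "x \<in> P" and y: "y \<in> P"
    and rcoord_eq: "\<And>k. k < 3 \<Longrightarrow> rcoord x k = rcoord y k"
  shows "x = y"
proof -
  have "x - y \<in> P"
    using P x y R.subspace_diff by (simp add: Esp_def)
  moreover have "x - y \<in> range (sc deps)"
    by (simp add: in_range_deps_iff rcoord_eq)
  moreover have "P \<inter> range (sc deps) = {0}"
    using P by (simp add: Esp_def)
  ultimately have "x - y \<in> {0}"
    by (metis IntI)
  then show ?thesis
    by simp
qed

lemma Esp_lift_exists:
  assumes P: "P \<in> Esp sc sp"
  obtains x where "x \<in> P" "\<And>k. k < 3 \<Longrightarrow> rcoord x k = r k"
proof -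
  define f :: "'m \<Rightarrow> real \<times> real \<times> real" where "f x = (rcoord x 0, rcoord x 1, rcoord x 2)" for x
  have "module ((*\<^sub>R) :: real \<Rightarrow> real \<times> real \<times> real \<Rightarrow> _)"
    by (simp add: module_def scaleR_add_right scaleR_add_left)
  then have hom: "module_hom (rscale sc) scaleR f"
    by (simp add: module_hom_iff f_def R.module_axioms)
  have inj: "inj_on f P"
    by (rule inj_onI, rule Esp_eqI[OF P]) (auto simp: f_def dest!: less_3_cases)
  have "f ` P = UNIV"
    using P by (intro linear_image_eq_UNIV[OF R.vector_space_axioms hom _ inj]) (simp_all add: Esp_def)
  then obtain x where x: "x \<in> P" "f x = (r 0, r 1, r 2)"
    by (metis UNIV_I imageE)
  show ?thesis
  proof (rule that[OF x(1)])
    fix k :: nat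
    assume "k < 3"
    then show "rcoord x k = r k"
      using x(2) by (auto simp: f_def dest!: less_3_cases)
  qed
qed

lemma Esp_unit_lifts:
  assumes P: "P \<in> Esp sc sp"
  obtains e where "\<And>i. e i \<in> P" "\<And>i k. k < 3 \<Longrightarrow> rcoord (e i) k = kdelta i k"
proof -
  have "\<forall>i. \<exists>x. x \<in> P \<and> (\<forall>k<3. rcoord x k = kdelta i k)"
  proof
    fix i
    show "\<exists>x. x \<in> P \<and> (\<forall>k<3. rcoord x k = kdelta i k)"
      by (rule Esp_lift_exists[OF P, of "kdelta i"]) auto
  qed
  then obtain e where "\<forall>i. e i \<in> P \<and> (\<forall>k<3. rcoord (e i) k = kdelta i k)"
    by (rule choice[THEN exE])
  then have "\<And>i. e i \<in> P" "\<And>i k. k < 3 \<Longrightarrow> rcoord (e i) k = kdelta i k"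
    by simp_all
  then show ?thesis
    by (rule that)
qed

text \<open>Since \<open>\<epsilon>\<close>-parts of scalar products vanish on \<open>P\<close>, the dual coordinates of the unit lifts form
  an antisymmetric matrix, i.e. the matrix of some \<open>p \<times> \<cdot>\<close>.\<close>

lemma Esp_subset_plane:
  assumes P: "P \<in> Esp sc sp"
  obtains p where "P \<subseteq> plane p"
proof -
  have sub: "R.subspace P" and orth: "\<And>x y. x \<in> P \<Longrightarrow> y \<in> P \<Longrightarrow> dDu (sp x y) = 0"
    using P by (auto simp: Esp_def)
  obtain e where e: "\<And>i. e i \<in> P" "\<And>i k. k < 3 \<Longrightarrow> rcoord (e i) k = kdelta i k"
    using Esp_unit_lifts[OF P] by blast
  define t where "t i j = dcoord (e i) j" for i j
  have "dDu (sp (e i) (e j)) = t j i + t i j" if "i < 3" "j < 3" for i j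
    using that by (simp add: dDu_sp_eq_sum_coord sum.distrib e(2) sum_kdelta t_def mult.commute)
  then have anti: "t j i = - t i j" if "i < 3" "j < 3" for i j
    using orth[OF e(1) e(1), of i j] that by simp
  have diag: "t i i = 0" if "i < 3" for i
    using anti[OF that that] by simp
  have "\<exists>p. \<forall>r. \<forall>j<3. (\<Sum>i<3. r i * t i j) = coord_cross p r j"
    by (rule antisymmetric_matrix_eq_coord_cross; fact)
  then obtain p where p: "\<And>r j. j < 3 \<Longrightarrow> (\<Sum>i<3. r i * t i j) = coord_cross p r j"
    by blast
  have "x \<in> plane p" if x: "x \<in> P" for x
  proof -
    define y where "y = (\<Sum>i<3. rscale sc (rcoord x i) (e i))"
    have "y \<in> P"
      unfolding y_def using e(1) by (intro R.subspace_sum[OF sub] R.subspace_scale[OF sub])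
    moreover have "rcoord y k = rcoord x k" if "k < 3" for k
      using that by (auto simp: y_def sum_lessThan_3 e(2) kdelta_def dest!: less_3_cases)
    ultimately have "y = x"
      using x by (intro Esp_eqI[OF P]) simp_all
    have "dcoord x j = coord_cross p (rcoord x) j" if "j < 3" for j
    proof -
      have "dcoord y j = (\<Sum>i<3. rcoord x i * t i j)"
        by (simp add: y_def t_def sum_lessThan_3)
      also have "\<dots> = coord_cross p (rcoord x) j"
        using that by (rule p)
      finally show ?thesis
        using \<open>y = x\<close> by simp
    qed
    then show ?thesis
      by (simp add: plane_def)
  qed
  then show ?thesis
    using that by blast
qed

lemma Esp_eq_plane:
  assumes P: "P \<in> Esp sc sp"
  obtains p where "P = plane p"
proof -
  obtain p where sub: "P \<subseteq> plane p"
    using Esp_subset_plane[OF P] by blast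
  have "x \<in> P" if x: "x \<in> plane p" for x
  proof -
    obtain y where y: "y \<in> P" "\<And>k. k < 3 \<Longrightarrow> rcoord y k = rcoord x k"
      using Esp_lift_exists[OF P] by blast
    have "y = x"
      using y sub x by (intro plane_eqI) auto
    then show ?thesis
      using y by simp
  qed
  then show ?thesis
    using that sub by blast
qed

lemma lift_plane: "lift sc (plane p) (vec_of r) = plane_point p r"
  unfolding lift_def
proof (rule the_equality)
  show "plane_point p r \<in> plane p \<and> qproj sc (plane_point p r) = vec_of r"
    by (simp add: plane_point_in_plane qproj_eq_vec_of vec_of_eq_iff rcoord_plane_point)
next
  fix x
  assume x: "x \<in> plane p \<and> qproj sc x = vec_of r"
  then show "x = plane_point p r"
    by (intro plane_eqI[where p = p])
      (simp_all add: plane_point_in_plane qproj_eq_vec_of vec_of_eq_iff rcoord_plane_point)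
qed

lemma plane_point_kdelta_inject:
  assumes "\<And>i. i < 3 \<Longrightarrow> plane_point p (kdelta i) = plane_point q (kdelta i)" and "k < 3"
  shows "p k = q k"
proof (rule coord_cross_kdelta_inject[OF _ assms(2)])
  fix i l :: nat
  assume "i < 3" "l < 3"
  then show "coord_cross p (kdelta i) l = coord_cross q (kdelta i) l"
    using arg_cong[OF assms(1), of i "\<lambda>x. dcoord x l"] by (simp add: dcoord_plane_point)
qed

lemma plane_point_kdelta_shift:
  assumes i: "i < 3"
  shows "plane_point p (kdelta i) + (\<Sum>j<3. \<Sum>k<3. sc (deps * dreal (levi i j k * d k)) (plane_point p (kdelta j)))
    = plane_point (\<lambda>k. p k + d k) (kdelta i)"
proof (rule coord_inject)
  fix l :: nat
  assume l: "l < 3"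
  have "coord (plane_point p (kdelta i)
      + (\<Sum>j<3. \<Sum>k<3. sc (deps * dreal (levi i j k * d k)) (plane_point p (kdelta j)))) l
    = Dual (kdelta i l) (coord_cross p (kdelta i) l + (\<Sum>k<3. levi i l k * d k))"
    using i l by (auto simp: coord_plane_point sum_lessThan_3 dual_eq_iff kdelta_def levi_def
        dest!: less_3_cases)
  also have "\<dots> = coord (plane_point (\<lambda>k. p k + d k) (kdelta i)) l"
    using i l by (auto simp: coord_plane_point sum_lessThan_3 kdelta_def levi_def dest!: less_3_cases)
  finally show "coord (plane_point p (kdelta i)
      + (\<Sum>j<3. \<Sum>k<3. sc (deps * dreal (levi i j k * d k)) (plane_point p (kdelta j)))) l
    = coord (plane_point (\<lambda>k. p k + d k) (kdelta i)) l" .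
qed

lemma Ediff_plane:
  "Ediff sc sp OR (plane q) (plane p) = vec_of (\<lambda>k. q k - p k)"
proof -
  define C where "C d \<longleftrightarrow> (\<forall>k\<ge>3. d k = 0) \<and> (\<forall>i<3. lift sc (plane q) (ebas sc sp OR i) =
     lift sc (plane p) (ebas sc sp OR i) + (\<Sum>j<3. \<Sum>k<3. sc (deps * dreal (levi i j k * d k))
        (lift sc (plane p) (ebas sc sp OR j))))" for d
  have shift: "C d \<longleftrightarrow> (\<forall>k\<ge>3. d k = 0)
      \<and> (\<forall>i<3. plane_point q (kdelta i) = plane_point (\<lambda>k. p k + d k) (kdelta i))" for d
    by (simp add: C_def ebas_eq lift_plane plane_point_kdelta_shift del: dreal_simps cong: conj_cong)
  have lifts_eq: "(\<forall>i<3. plane_point q (kdelta i) = plane_point (\<lambda>k. p k + d k) (kdelta i))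
      \<longleftrightarrow> (\<forall>k<3. d k = q k - p k)" for d
  proof
    assume "\<forall>i<3. plane_point q (kdelta i) = plane_point (\<lambda>k. p k + d k) (kdelta i)"
    then have "q k = p k + d k" if "k < 3" for k
      using that by (intro plane_point_kdelta_inject) simp_all
    then show "\<forall>k<3. d k = q k - p k"
      by simp
  next
    assume "\<forall>k<3. d k = q k - p k"
    then show "\<forall>i<3. plane_point q (kdelta i) = plane_point (\<lambda>k. p k + d k) (kdelta i)"
      by (auto intro: plane_point_cong)
  qed
  have "(THE d. C d) = (\<lambda>k. if k < 3 then q k - p k else 0)"
    by (rule the_equality) (auto simp: shift lifts_eq)
  then show ?thesis
    unfolding Ediff_def C_def[symmetric] vlin_eq by (intro vec_of_cong) simp
qed

lemma Eplus_plane: "v \<in> Vsp sc \<Longrightarrow> Eplus sc sp OR (plane p) v = plane (\<lambda>k. p k + vcoord v k)"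
  unfolding Eplus_def
proof (rule the_equality)
  assume v: "v \<in> Vsp sc"
  show "plane (\<lambda>k. p k + vcoord v k) \<in> Esp sc sp \<and> Ediff sc sp OR (plane (\<lambda>k. p k + vcoord v k)) (plane p) = v"
    using Vsp_eq_vec_of[OF v] by (simp add: plane_in_Esp Ediff_plane)
  fix Q
  assume Q: "Q \<in> Esp sc sp \<and> Ediff sc sp OR Q (plane p) = v"
  then obtain q where q: "Q = plane q"
    using Esp_eq_plane by blast
  then have "vec_of (\<lambda>k. q k - p k) = vec_of (vcoord v)"
    using Q Vsp_eq_vec_of[OF v] by (simp add: Ediff_plane)
  then show "Q = plane (\<lambda>k. p k + vcoord v k)"
    unfolding q vec_of_eq_iff by (intro plane_cong) (simp add: algebra_simps)
qed

section \<open>Screw fields\<close>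

lemma beta_plane: "beta sc sp z (plane p) = vec_of (\<lambda>k. dcoord z k - coord_cross p (rcoord z) k)"
proof -
  define w where "w = vec_of (\<lambda>k. dcoord z k - coord_cross p (rcoord z) k)"
  have "(THE v. v \<in> Vsp sc \<and> (\<exists>a\<in>plane p. \<exists>y. qproj sc y = v \<and> z = a + sc deps y)) = w"
  proof (rule the_equality)
    define y where "y = lincomb onb (\<lambda>k. dreal (dcoord z k - coord_cross p (rcoord z) k))"
    have "z = plane_point p (rcoord z) + sc deps y"
      by (rule rcoord_dcoord_inject)
        (simp_all add: rcoord_plane_point dcoord_plane_point y_def rcoord_lincomb_dreal del: dreal_simps)
    moreover have "qproj sc y = w"
      by (simp add: w_def y_def qproj_eq_vec_of vec_of_eq_iff rcoord_lincomb_dreal del: dreal_simps)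
    moreover have "w \<in> Vsp sc"
      by (simp add: w_def vec_of_in_Vsp)
    ultimately show "w \<in> Vsp sc \<and> (\<exists>a\<in>plane p. \<exists>y. qproj sc y = w \<and> z = a + sc deps y)"
      using plane_point_in_plane by blast
  next
    fix v
    assume "v \<in> Vsp sc \<and> (\<exists>a\<in>plane p. \<exists>y. qproj sc y = v \<and> z = a + sc deps y)"
    then obtain a y where a: "a \<in> plane p" and v: "v = qproj sc y" and z: "z = a + sc deps y"
      by auto
    have "rcoord y k = dcoord z k - coord_cross p (rcoord z) k" if "k < 3" for k
    proof -
      have "coord_cross p (rcoord a) k = coord_cross p (rcoord z) k"
        using that by (intro coord_cross_cong_right) (simp add: z)
      then show ?thesis
        using a that by (simp add: z plane_def)
    qed
    then show "v = w"
      by (simp add: v w_def qproj_eq_vec_of vec_of_eq_iff)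
  qed
  then show ?thesis
    by (simp add: beta_def plane_in_Esp w_def)
qed

lemma beta_outside_Esp: "P \<notin> Esp sc sp \<Longrightarrow> beta sc sp z P = undefined"
  by (simp add: beta_def)

lemma beta_in_Vsp: "P \<in> Esp sc sp \<Longrightarrow> beta sc sp z P \<in> Vsp sc"
  by (metis Esp_eq_plane beta_plane vec_of_in_Vsp)

lemma beta_in_se3: "beta sc sp z \<in> se3 sc sp OR"
  unfolding se3_def
proof (intro CollectI conjI allI impI ballI bexI)
  show "beta sc sp z P = undefined" if "P \<notin> Esp sc sp" for P
    using that by (rule beta_outside_Esp)
  show "beta sc sp z P \<in> Vsp sc" if "P \<in> Esp sc sp" for P
    using that by (rule beta_in_Vsp)
  show "qproj sc z \<in> Vsp sc"
    by (simp add: Vsp_def)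
  fix P Q
  assume "P \<in> Esp sc sp" "Q \<in> Esp sc sp"
  then obtain p q where pq: "P = plane p" "Q = plane q"
    using Esp_eq_plane by metis
  show "vsub sc (beta sc sp z Q) (beta sc sp z P) = vcross sc sp OR (qproj sc z) (Ediff sc sp OR Q P)"
    unfolding pq beta_plane vsub_eq vcross_eq Ediff_plane
    by (rule vec_of_cong) (auto simp: vcoord_vec_of vcoord_qproj algebra_simps dest!: less_3_cases)
qed

lemma beta_inj: "inj (beta sc sp)"
proof (rule injI)
  fix x y
  assume "beta sc sp x = beta sc sp y"
  then have "beta sc sp x (plane p) = beta sc sp y (plane p)" for p
    by simp
  then have h: "dcoord x k - coord_cross p (rcoord x) k = dcoord y k - coord_cross p (rcoord y) k"
    if "k < 3" for p k
    using that by (simp add: beta_plane vec_of_eq_iff)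
  have d: "dcoord x k = dcoord y k" if "k < 3" for k
    using h[OF that, of "\<lambda>_. 0"] that by (auto dest!: less_3_cases)
  have "rcoord x 2 = rcoord y 2" "rcoord x 1 = rcoord y 1" "rcoord x 0 = rcoord y 0"
    using h[of 1 "kdelta 0"] h[of 2 "kdelta 0"] h[of 2 "kdelta 1"] d[of 1] d[of 2]
    by (simp_all add: kdelta_def)
  then show "x = y"
    using d by (intro rcoord_dcoord_inject) (auto dest!: less_3_cases)
qed

lemma se3_eq_beta:
  assumes s: "s \<in> se3 sc sp OR"
  obtains z where "s = beta sc sp z"
proof -
  from s obtain w where
        screw: "\<And>P Q. P \<in> Esp sc sp \<Longrightarrow> Q \<in> Esp sc sp
          \<Longrightarrow> vsub sc (s Q) (s P) = vcross sc sp OR w (Ediff sc sp OR Q P)"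
    and outside: "\<And>P. P \<notin> Esp sc sp \<Longrightarrow> s P = undefined"
    and in_V: "\<And>P. P \<in> Esp sc sp \<Longrightarrow> s P \<in> Vsp sc"
    unfolding se3_def by blast
  define s0 where "s0 = s (plane (\<lambda>_. 0))"
  define z where "z = lincomb onb (\<lambda>k. Dual (vcoord w k) (vcoord s0 k))"
  have "s (plane p) = beta sc sp z (plane p)" for p
  proof -
    have "vec_of (\<lambda>k. vcoord (s (plane p)) k - vcoord s0 k)
        = vec_of (coord_cross (vcoord w) (vcoord (vec_of (\<lambda>k. p k - 0))))"
      using screw[OF plane_in_Esp plane_in_Esp, of p "\<lambda>_. 0"]
      by (simp add: s0_def vsub_eq vcross_eq Ediff_plane)
    moreover have "coord_cross (vcoord w) (vcoord (vec_of p)) k = coord_cross (vcoord w) p k" if "k < 3" for k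
      using that by (intro coord_cross_cong_right) (simp_all add: vcoord_vec_of)
    ultimately have "vcoord (s (plane p)) k - vcoord s0 k = coord_cross (vcoord w) p k" if "k < 3" for k
      using that by (simp add: vec_of_eq_iff)
    then have "vcoord (s (plane p)) k = vcoord s0 k + coord_cross (vcoord w) p k" if "k < 3" for k
      using that by (simp add: algebra_simps)
    have "s (plane p) = vec_of (vcoord (s (plane p)))"
      using Vsp_eq_vec_of[OF in_V[OF plane_in_Esp]] .
    also have "\<dots> = beta sc sp z (plane p)"
      unfolding beta_plane
      using \<open>\<And>k. k < 3 \<Longrightarrow> vcoord (s (plane p)) k = _\<close>
      by (intro vec_of_cong) (auto simp: z_def rcoord_def dcoord_def coord_lincomb dest!: less_3_cases)
    finally show ?thesis .
  qed
  then have "s = beta sc sp z"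
    by (metis Esp_eq_plane beta_outside_Esp outside ext)
  then show ?thesis
    using that by blast
qed

lemma beta_bij: "bij_betw (beta sc sp) UNIV (se3 sc sp OR)"
  unfolding bij_betw_def using beta_inj beta_in_se3 se3_eq_beta by blast

lemma vderiv_beta:
  assumes v: "v \<in> Vsp sc"
  shows "vderiv sc sp OR (beta sc sp z) (plane p) v = vec_of (coord_cross (rcoord z) (vcoord v))"
  unfolding vderiv_def vlin_eq
proof (rule vec_of_cong)
  fix k :: nat
  assume k: "k < 3"
  have "Eplus sc sp OR (plane p) (vscale sc t v) = plane (\<lambda>j. p j + t * vcoord v j)" for t
    by (simp add: Eplus_plane vscale_eq vec_of_in_Vsp vcoord_vec_of cong: plane_cong)
  then have "vinner sp (beta sc sp z (Eplus sc sp OR (plane p) (vscale sc t v))) (ebas sc sp OR k)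
      = (dcoord z k - coord_cross p (rcoord z) k) + t * coord_cross (rcoord z) (vcoord v) k" for t
    using k by (auto simp: vinner_ebas beta_plane vcoord_vec_of algebra_simps dest!: less_3_cases)
  moreover have "deriv (\<lambda>t. (dcoord z k - coord_cross p (rcoord z) k) + t * coord_cross (rcoord z) (vcoord v) k) 0
      = coord_cross (rcoord z) (vcoord v) k"
    by (rule DERIV_imp_deriv) (auto intro!: derivative_eq_intros)
  ultimately show "deriv (\<lambda>t. vinner sp (beta sc sp z (Eplus sc sp OR (plane p) (vscale sc t v)))
      (ebas sc sp OR k)) 0 = coord_cross (rcoord z) (vcoord v) k"
    by simp
qed

lemma beta_bracket:
  "beta sc sp (- dcross sc sp OR x y) = vf_bracket sc sp OR (beta sc sp x) (beta sc sp y)"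
proof
  fix P
  show "beta sc sp (- dcross sc sp OR x y) P = vf_bracket sc sp OR (beta sc sp x) (beta sc sp y) P"
  proof (cases "P \<in> Esp sc sp")
    case False
    then show ?thesis
      by (simp add: beta_outside_Esp vf_bracket_def)
  next
    case True
    then obtain p where p: "P = plane p"
      using Esp_eq_plane by blast
    have "vf_bracket sc sp OR (beta sc sp x) (beta sc sp y) P = vec_of (\<lambda>k.
        coord_cross (rcoord y) (vcoord (beta sc sp x P)) k - coord_cross (rcoord x) (vcoord (beta sc sp y P)) k)"
      using True by (simp add: vf_bracket_def p vderiv_beta beta_in_Vsp vsub_vec_of)
    also have "\<dots> = beta sc sp (- dcross sc sp OR x y) P"
      unfolding p beta_plane
      by (rule vec_of_cong) (auto simp: vcoord_vec_of rcoord_dcross dcoord_dcross algebra_simps dest!: less_3_cases)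
    finally show ?thesis
      by simp
  qed
qed

lemma beta_linear:
  assumes "P \<in> Esp sc sp"
  shows "beta sc sp (sc (dreal r) x + y) P = vadd sc (vscale sc r (beta sc sp x P)) (beta sc sp y P)"
proof -
  obtain p where p: "P = plane p"
    using Esp_eq_plane[OF assms] by blast
  show ?thesis
    unfolding p vadd_eq vscale_eq beta_plane
    by (rule vec_of_cong) (auto simp: vcoord_vec_of algebra_simps dest!: less_3_cases)
qed

end

theorem proposition8:
  fixes sc :: "dual \<Rightarrow> 'm::ab_group_add \<Rightarrow> 'm"
    and sp :: "'m \<Rightarrow> 'm \<Rightarrow> dual"
    and OR :: "(nat \<Rightarrow> 'm) set"
  assumes "dmod3 sc sp OR"
  shows "bij_betw (adx sc sp OR) UNIV (so3 sc sp)
    \<and> (\<forall>a x y. adx sc sp OR (sc a x + y) = (\<lambda>z. sc a (adx sc sp OR x z) + adx sc sp OR y z))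
    \<and> (\<forall>x y. adx sc sp OR (- dcross sc sp OR x y) = op_comm (adx sc sp OR x) (adx sc sp OR y))
    \<and> bij_betw (beta sc sp \<circ> inv_into UNIV (adx sc sp OR)) (so3 sc sp) (se3 sc sp OR)
    \<and> (\<forall>T\<in>so3 sc sp. \<forall>S\<in>so3 sc sp.
          (beta sc sp \<circ> inv_into UNIV (adx sc sp OR)) (op_comm T S)
          = vf_bracket sc sp OR ((beta sc sp \<circ> inv_into UNIV (adx sc sp OR)) T)
                                ((beta sc sp \<circ> inv_into UNIV (adx sc sp OR)) S))
    \<and> (\<forall>r. \<forall>T\<in>so3 sc sp. \<forall>S\<in>so3 sc sp. \<forall>P\<in>Esp sc sp.
          (beta sc sp \<circ> inv_into UNIV (adx sc sp OR)) (\<lambda>x. sc (dreal r) (T x) + S x) P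
          = vadd sc (vscale sc r ((beta sc sp \<circ> inv_into UNIV (adx sc sp OR)) T P))
                    ((beta sc sp \<circ> inv_into UNIV (adx sc sp OR)) S P))"
proof -
  interpret dual_module3 sc sp OR
    by unfold_locales (rule assms)
  let ?\<phi> = "beta sc sp \<circ> inv_into UNIV (adx sc sp OR)"
  have \<phi>_adx: "?\<phi> (adx sc sp OR z) = beta sc sp z" for z
    by (simp add: inv_into_f_f[OF adx_inj])
  have bij: "bij_betw ?\<phi> (so3 sc sp) (se3 sc sp OR)"
    using bij_betw_trans[OF bij_betw_inv_into[OF adx_bij] beta_bij] .
  have bracket: "?\<phi> (op_comm T S) = vf_bracket sc sp OR (?\<phi> T) (?\<phi> S)"
    if T: "T \<in> so3 sc sp" and S: "S \<in> so3 sc sp" for T S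
  proof -
    obtain x y where "T = adx sc sp OR x" and "S = adx sc sp OR y"
      by (rule so3_eq_adx[OF T], rule so3_eq_adx[OF S])
    then show ?thesis
      by (simp only: adx_bracket[symmetric] \<phi>_adx beta_bracket)
  qed
  have linear: "?\<phi> (\<lambda>x. sc (dreal r) (T x) + S x) P = vadd sc (vscale sc r (?\<phi> T P)) (?\<phi> S P)"
    if T: "T \<in> so3 sc sp" and S: "S \<in> so3 sc sp" and P: "P \<in> Esp sc sp" for r T S P
  proof -
    obtain x y where "T = adx sc sp OR x" and "S = adx sc sp OR y"
      by (rule so3_eq_adx[OF T], rule so3_eq_adx[OF S])
    then show ?thesis
      by (simp only: adx_linear[symmetric] \<phi>_adx beta_linear[OF P])
  qed
  show ?thesis
    by (intro conjI allI ballI adx_bij adx_linear adx_bracket bij bracket linear)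
qed

end
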